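(* For any two continuous functions $P,Q\colon[0,1]\to\mathbb{R}$, the Fréchet distance equals the interleaving distance of their sublevel-set functors: $d_{\mathrm F}(P,Q)=d_I(\overleftarrow{P},\overleftarrow{Q})$.
   Context: Fréchet distance: $d_{\mathrm F}(P,Q)=\inf_\mu\max_{t\in[0,1]}|P(t)-Q(\mu(t))|$, infimum over continuous increasing bijections $\mu\colon[0,1]\to[0,1]$. $\mathbb{R}_\le$ is the poset category of real numbers (a unique morphism $y\to y'$ iff $y\le y'$). $\mathcal U$ is the category whose objects are closed subsets of $[0,1]$ (including $\emptyset$) and whose morphisms are continuous increasing functions between them. For a continuous $P\colon[0,1]\to\mathbb{R}$, the functor $\overleftarrow{P}\colon\mathbb{R}_\le\to\mathcal U$ sends $y$ to $P^{-1}((-\infty,y])$ and $y\le y'$ to the inclusion map. For a functor $F\colon\mathbb{R}_\le\to\mathcal C$ and $\delta\ge0$, the shift $F[\delta]$ is given by $F[\delta](y)=F(y+\delta)$, $F[\delta](y\le y')=F(y+\delta\le y'+\delta)$; $\eta^{F,\delta}\colon F\Rightarrow F[\delta]$ is the natural transformation with components $F(y\le y+\delta)$; for a natural transformation $\varphi\colon F\Rightarrow G$, $\varphi[\delta]\colon F[\delta]\Rightarrow G[\delta]$ has components $\varphi_{y+\delta}$. A $\delta$-interleaving between $F,G$ is a pair of natural transformations $\varphi\colon F\Rightarrow G[\delta]$, $\psi\colon G\Rightarrow F[\delta]$ with $\psi[\delta]\circ\varphi=\eta^{F,2\delta}$ and $\varphi[\delta]\circ\psi=\eta^{G,2\delta}$.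 The interleaving distance $d_I(F,G)$ is the infimum of all $\delta\ge0$ for which a $\delta$-interleaving exists. *)

theory Defs
  imports "HOL-Analysis.Analysis"
begin

definition reparam :: "(real \<Rightarrow> real) \<Rightarrow> bool" where
  "reparam \<mu> \<longleftrightarrow> continuous_on {0..1} \<mu> \<and> strict_mono_on {0..1} \<mu> \<and> bij_betw \<mu> {0..1} {0..1}"

definition frechet_dist :: "(real \<Rightarrow> real) \<Rightarrow> (real \<Rightarrow> real) \<Rightarrow> ereal" where
  "frechet_dist P Q = (INF \<mu> \<in> {\<mu>. reparam \<mu>}. SUP t \<in> {0..1}. ereal \<bar>P t - Q (\<mu> t)\<bar>)"

text \<open>A morphism A -> B is represented by a function
  real => real that maps A into B and is continuous and (weakly) increasing on A;
  two representatives denote the same morphism iff they agree on A.\<close>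

definition U_obj :: "real set \<Rightarrow> bool" where
  "U_obj A \<longleftrightarrow> closed A \<and> A \<subseteq> {0..1}"

definition U_mor :: "real set \<Rightarrow> real set \<Rightarrow> (real \<Rightarrow> real) \<Rightarrow> bool" where
  "U_mor A B f \<longleftrightarrow> U_obj A \<and> U_obj B \<and> f ` A \<subseteq> B \<and> continuous_on A f \<and> mono_on A f"

text \<open>A functor is a pair (object map, morphism map); the morphism map applied to
  y y' gives F(y \<le> y').\<close>
type_synonym functorU = "(real \<Rightarrow> real set) \<times> (real \<Rightarrow> real \<Rightarrow> real \<Rightarrow> real)"

definition is_functorU :: "functorU \<Rightarrow> bool" where
  "is_functorU F \<longleftrightarrow>
     (\<forall>y. U_obj (fst F y)) \<and>
     (\<forall>y y'. y \<le> y' \<longrightarrow> U_mor (fst F y) (fst F y') (snd F y y')) \<and>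
     (\<forall>y. \<forall>x\<in>fst F y. snd F y y x = x) \<and>
     (\<forall>y y' y''. y \<le> y' \<longrightarrow> y' \<le> y'' \<longrightarrow>
        (\<forall>x\<in>fst F y. snd F y' y'' (snd F y y' x) = snd F y y'' x))"

definition shiftU :: "functorU \<Rightarrow> real \<Rightarrow> functorU" where
  "shiftU F \<delta> = ((\<lambda>y. fst F (y + \<delta>)), (\<lambda>y y'. snd F (y + \<delta>) (y' + \<delta>)))"

definition nat_transU :: "functorU \<Rightarrow> functorU \<Rightarrow> (real \<Rightarrow> real \<Rightarrow> real) \<Rightarrow> bool" where
  "nat_transU F G \<phi> \<longleftrightarrow>
     (\<forall>y. U_mor (fst F y) (fst G y) (\<phi> y)) \<and>
     (\<forall>y y'. y \<le> y' \<longrightarrow> (\<forall>x\<in>fst F y. snd G y y' (\<phi> y x) = \<phi> y' (snd F y y' x)))"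

definition eta :: "functorU \<Rightarrow> real \<Rightarrow> (real \<Rightarrow> real \<Rightarrow> real)" where
  "eta F \<delta> = (\<lambda>y. snd F y (y + \<delta>))"

definition shift_nt :: "(real \<Rightarrow> real \<Rightarrow> real) \<Rightarrow> real \<Rightarrow> (real \<Rightarrow> real \<Rightarrow> real)" where
  "shift_nt \<phi> \<delta> = (\<lambda>y. \<phi> (y + \<delta>))"

definition comp_nt :: "(real \<Rightarrow> real \<Rightarrow> real) \<Rightarrow> (real \<Rightarrow> real \<Rightarrow> real) \<Rightarrow> (real \<Rightarrow> real \<Rightarrow> real)" where
  "comp_nt \<psi> \<phi> = (\<lambda>y. \<psi> y \<circ> \<phi> y)"

definition nt_eq :: "functorU \<Rightarrow> (real \<Rightarrow> real \<Rightarrow> real) \<Rightarrow> (real \<Rightarrow> real \<Rightarrow> real) \<Rightarrow> bool" where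
  "nt_eq F \<alpha> \<beta> \<longleftrightarrow> (\<forall>y. \<forall>x\<in>fst F y. \<alpha> y x = \<beta> y x)"

definition interleavingU :: "real \<Rightarrow> functorU \<Rightarrow> functorU \<Rightarrow> bool" where
  "interleavingU \<delta> F G \<longleftrightarrow>
     (\<exists>\<phi> \<psi>. nat_transU F (shiftU G \<delta>) \<phi> \<and> nat_transU G (shiftU F \<delta>) \<psi> \<and>
        nt_eq F (comp_nt (shift_nt \<psi> \<delta>) \<phi>) (eta F (2 * \<delta>)) \<and>
        nt_eq G (comp_nt (shift_nt \<phi> \<delta>) \<psi>) (eta G (2 * \<delta>)))"

definition interleaving_dist :: "functorU \<Rightarrow> functorU \<Rightarrow> ereal" where
  "interleaving_dist F G = (INF \<delta> \<in> {\<delta>. \<delta> \<ge> 0 \<and> interleavingU \<delta> F G}. ereal \<delta>)"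

definition sublevel :: "(real \<Rightarrow> real) \<Rightarrow> functorU" where
  "sublevel P = ((\<lambda>y. {t \<in> {0..1}. P t \<le> y}), (\<lambda>y y' x. x))"

end

theory Submission
  imports Defs
begin

text \<open>In a \<delta>-interleaving of sublevel-set functors all structure maps are inclusions, so
  naturality makes the interleaving maps independent of the level and the interleaving
  equations make them mutually inverse. Above the maxima of P and Q every sublevel set is
  all of [0,1], hence these maps are a reparametrization \<mu> and its inverse; that \<mu> sends the
  sublevel set at height y into the one at height y + \<delta>, and its inverse does the same in
  the other direction, says exactly that \<bar>P t - Q (\<mu> t)\<bar> \<le> \<delta>. Conversely such a \<mu> is a constant
  family of interleaving maps, so both distances are the infimum of the same set of bounds.\<close>

abbreviation sublevel_set :: "(real \<Rightarrow> real) \<Rightarrow> real \<Rightarrow> real set" where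
  "sublevel_set P y \<equiv> {t \<in> {0..1}. P t \<le> y}"

lemma reparamI_inverse:
  assumes "continuous_on {0..1} \<mu>" and "mono_on {0..1} \<mu>"
    and "\<mu> ` {0..1} \<subseteq> {0..1}" and "\<nu> ` {0..1} \<subseteq> {0..1}"
    and "\<And>x. x \<in> {0..1} \<Longrightarrow> \<nu> (\<mu> x) = x" and "\<And>x. x \<in> {0..1} \<Longrightarrow> \<mu> (\<nu> x) = x"
  shows "reparam \<mu>"
proof -
  have "inj_on \<mu> {0..1}"
    using assms(5) by (rule inj_on_inverseI)
  with assms(2) have "strict_mono_on {0..1} \<mu>"
    by (rule mono_imp_strict_mono)
  moreover have "bij_betw \<mu> {0..1} {0..1}"
    using assms(3-6) by (intro bij_betwI[where g = \<nu>]) auto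
  ultimately show ?thesis
    using assms(1) unfolding reparam_def by blast
qed

lemma reparamD:
  assumes "reparam \<mu>"
  shows "continuous_on {0..1} \<mu>" and "mono_on {0..1} \<mu>"
    and "\<And>t. t \<in> {0..1} \<Longrightarrow> \<mu> t \<in> {0..1}"
proof -
  show "continuous_on {0..1} \<mu>" and "mono_on {0..1} \<mu>"
    using assms strict_mono_on_imp_mono_on unfolding reparam_def by auto
  show "\<mu> t \<in> {0..1}" if "t \<in> {0..1}" for t
    using assms that bij_betw_apply unfolding reparam_def by metis
qed

lemma reparam_inverse:
  assumes "reparam \<mu>"
  obtains \<nu> where "reparam \<nu>"
    and "\<And>x. x \<in> {0..1} \<Longrightarrow> \<nu> (\<mu> x) = x" and "\<And>x. x \<in> {0..1} \<Longrightarrow> \<mu> (\<nu> x) = x"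
proof
  define \<nu> where "\<nu> = inv_into {0..1} \<mu>"
  have cont: "continuous_on {0..1} \<mu>" and mono: "strict_mono_on {0..1} \<mu>"
    and bij: "bij_betw \<mu> {0..1} {0..1}"
    using assms unfolding reparam_def by auto
  then have image: "\<mu> ` {0..1} = {0..1}" and inj: "inj_on \<mu> {0..1}"
    unfolding bij_betw_def by auto
  show \<nu>\<mu>: "\<nu> (\<mu> x) = x" if "x \<in> {0..1}" for x
    using inj that unfolding \<nu>_def by simp
  show \<mu>\<nu>: "\<mu> (\<nu> x) = x" if "x \<in> {0..1}" for x
    using image that unfolding \<nu>_def by (simp add: f_inv_into_f)
  have \<nu>_into: "\<nu> x \<in> {0..1}" if "x \<in> {0..1}" for x
    using image that unfolding \<nu>_def by (metis inv_into_into)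
  have "continuous_on {0..1} \<nu>"
    using continuous_on_inv[OF cont compact_Icc] \<nu>\<mu> image by simp
  moreover have "mono_on {0..1} \<nu>"
  proof (rule mono_onI)
    fix r s :: real
    assume r: "r \<in> {0..1}" and s: "s \<in> {0..1}" and "r \<le> s"
    then have "\<mu> (\<nu> r) \<le> \<mu> (\<nu> s)"
      by (simp add: \<mu>\<nu>)
    then show "\<nu> r \<le> \<nu> s"
      using strict_mono_on_less_eq[OF mono \<nu>_into[OF r] \<nu>_into[OF s]] by simp
  qed
  ultimately show "reparam \<nu>"
    using \<nu>_into image \<mu>\<nu> \<nu>\<mu> by (intro reparamI_inverse[where \<nu> = \<mu>]) auto
qed

lemma U_obj_sublevel_set:
  assumes "continuous_on {0..1} P"
  shows "U_obj (sublevel_set P y)"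
proof -
  have "closed ({0..1} \<inter> P -` {..y})"
    using assms by (intro continuous_closed_preimage) auto
  moreover have "sublevel_set P y = {0..1} \<inter> P -` {..y}"
    by auto
  ultimately show ?thesis
    unfolding U_obj_def by auto
qed

lemma U_mor_sublevel_set_reparam:
  assumes "continuous_on {0..1} P" and "continuous_on {0..1} Q" and "reparam \<mu>"
    and bound: "\<And>t. t \<in> {0..1} \<Longrightarrow> Q (\<mu> t) \<le> P t + \<delta>"
  shows "U_mor (sublevel_set P y) (sublevel_set Q (y + \<delta>)) \<mu>"
  unfolding U_mor_def
proof (intro conjI)
  note cont = reparamD(1)[OF assms(3)] and mono = reparamD(2)[OF assms(3)]
    and into = reparamD(3)[OF assms(3)]
  show "U_obj (sublevel_set P y)" and "U_obj (sublevel_set Q (y + \<delta>))"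
    by (rule U_obj_sublevel_set[OF assms(1)], rule U_obj_sublevel_set[OF assms(2)])
  show "\<mu> ` sublevel_set P y \<subseteq> sublevel_set Q (y + \<delta>)"
  proof (rule image_subsetI)
    fix t assume "t \<in> sublevel_set P y"
    then show "\<mu> t \<in> sublevel_set Q (y + \<delta>)"
      using into[of t] bound[of t] by auto
  qed
  show "continuous_on (sublevel_set P y) \<mu>"
    by (rule continuous_on_subset[OF cont]) auto
  show "mono_on (sublevel_set P y) \<mu>"
    by (rule mono_on_subset[OF mono]) auto
qed

lemma nat_transU_sublevel_iff:
  "nat_transU (sublevel P) (shiftU (sublevel Q) \<delta>) \<phi> \<longleftrightarrow>
     (\<forall>y. U_mor (sublevel_set P y) (sublevel_set Q (y + \<delta>)) (\<phi> y)) \<and>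
     (\<forall>y y'. y \<le> y' \<longrightarrow> (\<forall>x \<in> sublevel_set P y. \<phi> y' x = \<phi> y x))"
  unfolding nat_transU_def sublevel_def shiftU_def by auto

lemma interleavingU_sublevel_iff:
  "interleavingU \<delta> (sublevel P) (sublevel Q) \<longleftrightarrow>
     (\<exists>\<phi> \<psi>. nat_transU (sublevel P) (shiftU (sublevel Q) \<delta>) \<phi> \<and>
        nat_transU (sublevel Q) (shiftU (sublevel P) \<delta>) \<psi> \<and>
        (\<forall>y. \<forall>x \<in> sublevel_set P y. \<psi> (y + \<delta>) (\<phi> y x) = x) \<and>
        (\<forall>y. \<forall>x \<in> sublevel_set Q y. \<phi> (y + \<delta>) (\<psi> y x) = x))"
  unfolding interleavingU_def nt_eq_def comp_nt_def shift_nt_def eta_def sublevel_def by auto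

lemma nat_transU_sublevel_level_indep:
  assumes "nat_transU (sublevel P) (shiftU (sublevel Q) \<delta>) \<phi>"
    and "t \<in> {0..1}" and "P t \<le> y" and "y \<le> y'"
  shows "\<phi> y' t = \<phi> y t"
  using assms unfolding nat_transU_sublevel_iff by blast

lemma nat_transU_sublevel_le:
  assumes "nat_transU (sublevel P) (shiftU (sublevel Q) \<delta>) \<phi>"
    and "t \<in> {0..1}" and "P t \<le> y"
  shows "Q (\<phi> y t) \<le> P t + \<delta>"
proof -
  have "\<phi> y t = \<phi> (P t) t"
    using assms by (intro nat_transU_sublevel_level_indep) auto
  moreover have "\<phi> (P t) t \<in> sublevel_set Q (P t + \<delta>)"
    using assms unfolding nat_transU_sublevel_iff U_mor_def by blast
  ultimately show ?thesis
    by simp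
qed

lemma nat_transU_sublevel_top:
  assumes "nat_transU (sublevel P) (shiftU (sublevel Q) \<delta>) \<phi>"
    and "\<And>t. t \<in> {0..1} \<Longrightarrow> P t \<le> y" and "\<And>t. t \<in> {0..1} \<Longrightarrow> Q t \<le> y + \<delta>"
  shows "U_mor {0..1} {0..1} (\<phi> y)"
proof -
  have "sublevel_set P y = {0..1}" and "sublevel_set Q (y + \<delta>) = {0..1}"
    using assms(2,3) by fastforce+
  then show ?thesis
    using assms(1) unfolding nat_transU_sublevel_iff by metis
qed

lemma reparam_of_interleavingU_sublevel:
  assumes cP: "continuous_on {0..1} P" and cQ: "continuous_on {0..1} Q" and "\<delta> \<ge> 0"
    and "interleavingU \<delta> (sublevel P) (sublevel Q)"
  obtains \<mu> where "reparam \<mu>" and "\<And>t. t \<in> {0..1} \<Longrightarrow> \<bar>P t - Q (\<mu> t)\<bar> \<le> \<delta>"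
proof -
  obtain \<phi> \<psi> where
    \<phi>: "nat_transU (sublevel P) (shiftU (sublevel Q) \<delta>) \<phi>" and
    \<psi>: "nat_transU (sublevel Q) (shiftU (sublevel P) \<delta>) \<psi>" and
    \<psi>\<phi>: "\<And>y x. x \<in> sublevel_set P y \<Longrightarrow> \<psi> (y + \<delta>) (\<phi> y x) = x" and
    \<phi>\<psi>: "\<And>y x. x \<in> sublevel_set Q y \<Longrightarrow> \<phi> (y + \<delta>) (\<psi> y x) = x"
    using assms(4) unfolding interleavingU_sublevel_iff by blast
  obtain tP tQ where "tP \<in> {0..1}" "\<forall>t\<in>{0..1}. P t \<le> P tP" "tQ \<in> {0..1}" "\<forall>t\<in>{0..1}. Q t \<le> Q tQ"
    using continuous_attains_sup[OF compact_Icc _ cP] continuous_attains_sup[OF compact_Icc _ cQ]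
    by auto
  then obtain Y where PY: "\<And>t. t \<in> {0..1} \<Longrightarrow> P t \<le> Y" and QY: "\<And>t. t \<in> {0..1} \<Longrightarrow> Q t \<le> Y"
    by (metis le_max_iff_disj)
  then have PY': "P t \<le> Y + \<delta>" and QY': "Q t \<le> Y + \<delta>" if "t \<in> {0..1}" for t
    using \<open>\<delta> \<ge> 0\<close> that by (auto intro: add_increasing2)
  define \<mu> \<nu> where "\<mu> = \<phi> Y" and "\<nu> = \<psi> Y"
  have \<mu>_mor: "U_mor {0..1} {0..1} \<mu>" and \<nu>_mor: "U_mor {0..1} {0..1} \<nu>"
    unfolding \<mu>_def \<nu>_def using \<phi> \<psi> PY QY PY' QY' by (blast intro: nat_transU_sublevel_top)+
  then have \<mu>_into: "\<mu> x \<in> {0..1}" and \<nu>_into: "\<nu> x \<in> {0..1}" if "x \<in> {0..1}" for x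
    using that unfolding U_mor_def by blast+
  have \<nu>\<mu>: "\<nu> (\<mu> x) = x" if "x \<in> {0..1}" for x
  proof -
    have "\<nu> (\<mu> x) = \<psi> (Y + \<delta>) (\<mu> x)"
      using nat_transU_sublevel_level_indep[OF \<psi> \<mu>_into[OF that] QY[OF \<mu>_into[OF that]], of "Y + \<delta>"]
        \<open>\<delta> \<ge> 0\<close> unfolding \<nu>_def by simp
    also have "\<dots> = x"
      using \<psi>\<phi> PY that unfolding \<mu>_def by simp
    finally show ?thesis .
  qed
  have \<mu>\<nu>: "\<mu> (\<nu> x) = x" if "x \<in> {0..1}" for x
  proof -
    have "\<mu> (\<nu> x) = \<phi> (Y + \<delta>) (\<nu> x)"
      using nat_transU_sublevel_level_indep[OF \<phi> \<nu>_into[OF that] PY[OF \<nu>_into[OF that]], of "Y + \<delta>"]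
        \<open>\<delta> \<ge> 0\<close> unfolding \<mu>_def by simp
    also have "\<dots> = x"
      using \<phi>\<psi> QY that unfolding \<nu>_def by simp
    finally show ?thesis .
  qed
  have "reparam \<mu>"
    using \<mu>_mor \<mu>_into \<nu>_into \<nu>\<mu> \<mu>\<nu> unfolding U_mor_def
    by (intro reparamI_inverse[where \<nu> = \<nu>]) auto
  moreover have "\<bar>P t - Q (\<mu> t)\<bar> \<le> \<delta>" if "t \<in> {0..1}" for t
  proof -
    have "Q (\<mu> t) \<le> P t + \<delta>"
      unfolding \<mu>_def by (rule nat_transU_sublevel_le[OF \<phi> that PY[OF that]])
    moreover have "P (\<nu> (\<mu> t)) \<le> Q (\<mu> t) + \<delta>"
      unfolding \<nu>_def by (rule nat_transU_sublevel_le[OF \<psi> \<mu>_into[OF that] QY[OF \<mu>_into[OF that]]])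
    ultimately show ?thesis
      using \<nu>\<mu>[OF that] by simp
  qed
  ultimately show ?thesis
    using that by blast
qed

lemma interleavingU_sublevel_of_reparam:
  assumes cP: "continuous_on {0..1} P" and cQ: "continuous_on {0..1} Q" and "reparam \<mu>"
    and bound: "\<And>t. t \<in> {0..1} \<Longrightarrow> \<bar>P t - Q (\<mu> t)\<bar> \<le> \<delta>"
  shows "interleavingU \<delta> (sublevel P) (sublevel Q)"
proof -
  obtain \<nu> where "reparam \<nu>" and \<nu>\<mu>: "\<And>x. x \<in> {0..1} \<Longrightarrow> \<nu> (\<mu> x) = x"
    and \<mu>\<nu>: "\<And>x. x \<in> {0..1} \<Longrightarrow> \<mu> (\<nu> x) = x"
    using reparam_inverse[OF \<open>reparam \<mu>\<close>] by blast
  have "P (\<nu> s) \<le> Q s + \<delta>" if "s \<in> {0..1}" for s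
    using bound[OF reparamD(3)[OF \<open>reparam \<nu>\<close> that]] \<mu>\<nu>[OF that] by simp
  then have "U_mor (sublevel_set Q y) (sublevel_set P (y + \<delta>)) \<nu>" for y
    by (rule U_mor_sublevel_set_reparam[OF cQ cP \<open>reparam \<nu>\<close>])
  moreover have "U_mor (sublevel_set P y) (sublevel_set Q (y + \<delta>)) \<mu>" for y
    using bound by (intro U_mor_sublevel_set_reparam[OF cP cQ \<open>reparam \<mu>\<close>]) fastforce
  ultimately show ?thesis
    unfolding interleavingU_sublevel_iff nat_transU_sublevel_iff
    using \<nu>\<mu> \<mu>\<nu> by (intro exI[of _ "\<lambda>_. \<mu>"] exI[of _ "\<lambda>_. \<nu>"]) auto
qed

lemma INF_SUP_eq_INF_uniform_bounds:
  fixes f :: "'a \<Rightarrow> 'b \<Rightarrow> real"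
  assumes "T \<noteq> {}" and nonneg: "\<And>a t. a \<in> A \<Longrightarrow> t \<in> T \<Longrightarrow> 0 \<le> f a t"
  shows "(INF a \<in> A. SUP t \<in> T. ereal (f a t)) =
    (INF \<delta> \<in> {\<delta>. 0 \<le> \<delta> \<and> (\<exists>a \<in> A. \<forall>t \<in> T. f a t \<le> \<delta>)}. ereal \<delta>)"
    (is "?lhs = (INF \<delta> \<in> ?bounds. ereal \<delta>)")
proof (rule antisym)
  show "?lhs \<le> (INF \<delta> \<in> ?bounds. ereal \<delta>)"
  proof (rule INF_greatest)
    fix \<delta> assume "\<delta> \<in> ?bounds"
    then obtain a where "a \<in> A" and "\<forall>t \<in> T. f a t \<le> \<delta>"
      by blast
    then have "(SUP t \<in> T. ereal (f a t)) \<le> ereal \<delta>"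
      by (intro SUP_least) auto
    then show "?lhs \<le> ereal \<delta>"
      by (rule order_trans[OF INF_lower[OF \<open>a \<in> A\<close>]])
  qed
  show "(INF \<delta> \<in> ?bounds. ereal \<delta>) \<le> ?lhs"
  proof (rule INF_greatest)
    fix a assume "a \<in> A"
    define S where "S = (SUP t \<in> T. ereal (f a t))"
    have S_upper: "ereal (f a t) \<le> S" if "t \<in> T" for t
      unfolding S_def using that by (rule SUP_upper)
    obtain t0 where "t0 \<in> T"
      using \<open>T \<noteq> {}\<close> by blast
    then have "0 \<le> S"
      using nonneg[OF \<open>a \<in> A\<close>] by (intro order.trans[OF _ S_upper]) simp_all
    then consider d where "S = ereal d" "0 \<le> d" | "S = \<infinity>"
      by (cases S) auto
    then show "(INF \<delta> \<in> ?bounds. ereal \<delta>) \<le> S"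
    proof cases
      case 1
      then have "d \<in> ?bounds"
        using S_upper \<open>a \<in> A\<close> by auto
      then show ?thesis
        using 1 by (simp add: INF_lower)
    qed simp
  qed
qed

theorem theorem36:
  fixes P Q :: "real \<Rightarrow> real"
  assumes "continuous_on {0..1} P" and "continuous_on {0..1} Q"
  shows "frechet_dist P Q = interleaving_dist (sublevel P) (sublevel Q)"
proof -
  have "interleavingU \<delta> (sublevel P) (sublevel Q) \<longleftrightarrow>
      (\<exists>\<mu> \<in> {\<mu>. reparam \<mu>}. \<forall>t \<in> {0..1}. \<bar>P t - Q (\<mu> t)\<bar> \<le> \<delta>)" if "0 \<le> \<delta>" for \<delta>
    using reparam_of_interleavingU_sublevel[OF assms that]
      interleavingU_sublevel_of_reparam[OF assms] by (metis mem_Collect_eq)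
  then have bounds_eq: "{\<delta>. 0 \<le> \<delta> \<and> interleavingU \<delta> (sublevel P) (sublevel Q)} =
      {\<delta>. 0 \<le> \<delta> \<and> (\<exists>\<mu> \<in> {\<mu>. reparam \<mu>}. \<forall>t \<in> {0..1}. \<bar>P t - Q (\<mu> t)\<bar> \<le> \<delta>)}"
    by blast
  have "frechet_dist P Q =
      (INF \<delta> \<in> {\<delta>. 0 \<le> \<delta> \<and> (\<exists>\<mu> \<in> {\<mu>. reparam \<mu>}. \<forall>t \<in> {0..1}. \<bar>P t - Q (\<mu> t)\<bar> \<le> \<delta>)}. ereal \<delta>)"
    unfolding frechet_dist_def by (rule INF_SUP_eq_INF_uniform_bounds) auto
  also have "\<dots> = interleaving_dist (sublevel P) (sublevel Q)"
    unfolding interleaving_dist_def bounds_eq ..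
  finally show ?thesis .
qed

end
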